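(* Let $\hat{x}$ be the final value of the vector $x$ in Algorithm 1 and let $OPT$ be a set maximizing $f$ among subsets of $N$ of size at most $k$. If $\|\hat{x}\|_1<k$, then $F(\hat{x}+\mathbf{1}_{OPT\setminus\mathrm{supp}(\hat{x})})\ge(1-p)\cdot\big[p\cdot f(OPT)+(1-p)\cdot f(OPT\setminus\mathrm{supp}(\hat{x}))\big]$.
   Context: Setting: finite ground set $N$ whose elements arrive one at a time in a stream, non-negative submodular $f\colon 2^N\to\mathbb{R}_{\ge 0}$, positive integer $k$. $\mathbf{1}_A$ is the characteristic vector of $A$. $F$ is the multilinear extension of $f$: $F(x)=\sum_{A\subseteq N} f(A)\prod_{u\in A}x_u\prod_{u\notin A}(1-x_u)$ for $x\in[0,1]^N$, and $\partial_uF(x)=F(x\vee \mathbf{1}_u)-F(x\wedge\mathbf{1}_{N\setminus\{u\}})$ (coordinatewise max/min). $\mathrm{supp}(x)=\{u: x_u>0\}$. Algorithm 1 has parameters $p\in(0,1)$, $c>0$, $\alpha\in(0,1]$ and a number $\tau$. It starts with $x=\mathbf{0}$, and when an element $u$ arrives, if $\partial_uF(x)\ge c\tau/k$ it sets $x\leftarrow x+\min\{p,\,k-\|x\|_1\}\cdot\mathbf{1}_u$ (otherwise $x$ is unchanged). After the stream ends, it computes a random set $S_1$ with $|S_1|\le k$ and $\mathbb{E}[f(S_1)]\ge F(x)$, and a random set $S_2\subseteq\mathrm{supp}(x)$ with $|S_2|\le k$ and $\mathbb{E}[f(S_2)]\ge\alpha\cdot\max_{S\subseteq\mathrm{supp}(x),|S|\le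 k}f(S)$, and outputs the better of $S_1,S_2$. *)

theory Defs
  imports Main "HOL-Library.Indicator_Function"
begin

definition submodular :: "'a set \<Rightarrow> ('a set \<Rightarrow> real) \<Rightarrow> bool" where
  "submodular N f \<longleftrightarrow>
     (\<forall>A B. A \<subseteq> N \<longrightarrow> B \<subseteq> N \<longrightarrow> f (A \<union> B) + f (A \<inter> B) \<le> f A + f B)"

(* Multilinear extension F of f; vectors in [0,1]^N are functions 'a => real *)
definition multilinear :: "'a set \<Rightarrow> ('a set \<Rightarrow> real) \<Rightarrow> ('a \<Rightarrow> real) \<Rightarrow> real" where
  "multilinear N f x =
     (\<Sum>A\<in>Pow N. f A * (\<Prod>u\<in>A. x u) * (\<Prod>u\<in>N - A. 1 - x u))"

definition partialF :: "'a set \<Rightarrow> ('a set \<Rightarrow> real) \<Rightarrow> ('a \<Rightarrow> real) \<Rightarrow> 'a \<Rightarrow> real" where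
  "partialF N f x u =
     multilinear N f (\<lambda>v. max (x v) (indicator {u} v))
     - multilinear N f (\<lambda>v. min (x v) (indicator (N - {u}) v))"

definition supp :: "'a set \<Rightarrow> ('a \<Rightarrow> real) \<Rightarrow> 'a set" where
  "supp N x = {u \<in> N. x u > 0}"

definition norm1 :: "'a set \<Rightarrow> ('a \<Rightarrow> real) \<Rightarrow> real" where
  "norm1 N x = (\<Sum>u\<in>N. \<bar>x u\<bar>)"

definition alg1_step ::
  "'a set \<Rightarrow> ('a set \<Rightarrow> real) \<Rightarrow> nat \<Rightarrow> real \<Rightarrow> real \<Rightarrow> real
     \<Rightarrow> ('a \<Rightarrow> real) \<Rightarrow> 'a \<Rightarrow> ('a \<Rightarrow> real)" where
  "alg1_step N f k p c \<tau> x u =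
     (if partialF N f x u \<ge> c * \<tau> / real k
      then (\<lambda>v. x v + min p (real k - norm1 N x) * indicator {u} v)
      else x)"

definition alg1_x ::
  "'a set \<Rightarrow> ('a set \<Rightarrow> real) \<Rightarrow> nat \<Rightarrow> real \<Rightarrow> real \<Rightarrow> real
     \<Rightarrow> 'a list \<Rightarrow> ('a \<Rightarrow> real)" where
  "alg1_x N f k p c \<tau> stream = foldl (alg1_step N f k p c \<tau>) (\<lambda>_. 0) stream"

end

theory Submission
  imports Defs
begin

text \<open>Since the final norm is below \<open>k\<close>, no increment was ever truncated, so \<open>x\<close> takes only
  the values \<open>0\<close> and \<open>p\<close>. With \<open>S = supp x\<close> and \<open>T = OPT - S\<close>, the vector \<open>x + 1\<^sub>T\<close> is
  integral outside \<open>S\<close>; fixing those coordinates turns \<open>F (x + 1\<^sub>T)\<close> into the multilinear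
  extension \<open>G\<close> of the submodular function \<open>R \<mapsto> f (T \<union> R)\<close> at the constant vector \<open>p\<close> on
  \<open>S\<close>. Raising the coordinates of a set \<open>C\<close> disjoint from \<open>B\<close> one at a time to \<open>1\<close>, submodularity
  gives \<open>G (p on B \<union> C) \<ge> (1 - p) G (p on B) + p G (p on B, 1 on C)\<close>. Applying this with
  \<open>B = S \<inter> OPT\<close>, \<open>C = S - OPT\<close>, dropping the non-negative second term, and applying it once more
  to \<open>B\<close> alone yields the bound.\<close>

lemma multilinear_empty: "multilinear {} g y = g {}"
  unfolding multilinear_def by simp

lemma multilinear_insert:
  assumes fin: "finite N" and a: "a \<notin> N"
  shows "multilinear (insert a N) g y
     = y a * multilinear N (\<lambda>A. g (insert a A)) y + (1 - y a) * multilinear N g y"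
proof -
  have disj: "Pow N \<inter> insert a ` Pow N = {}" using a by auto
  have inj: "inj_on (insert a) (Pow N)" using a by (auto simp: inj_on_def)
  define h where "h A = g A * (\<Prod>u\<in>A. y u) * (\<Prod>u\<in>insert a N - A. 1 - y u)" for A
  have "multilinear (insert a N) g y = sum h (Pow N \<union> insert a ` Pow N)"
    unfolding multilinear_def h_def Pow_insert ..
  also have "\<dots> = sum h (Pow N) + sum (h \<circ> insert a) (Pow N)"
    using fin disj by (simp add: sum.union_disjoint sum.reindex[OF inj])
  also have "sum (h \<circ> insert a) (Pow N) = y a * multilinear N (\<lambda>A. g (insert a A)) y"
    unfolding multilinear_def sum_distrib_left
  proof (rule sum.cong[OF refl])
    fix A assume "A \<in> Pow N"
    then have "finite A" "a \<notin> A" "insert a N - insert a A = N - A"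
      using fin a finite_subset by auto
    then show "(h \<circ> insert a) A = y a * (g (insert a A) * prod y A * (\<Prod>u\<in>N - A. 1 - y u))"
      unfolding h_def o_def by simp
  qed
  also have "sum h (Pow N) = (1 - y a) * multilinear N g y"
    unfolding multilinear_def sum_distrib_left
  proof (rule sum.cong[OF refl])
    fix A assume "A \<in> Pow N"
    then have "insert a N - A = insert a (N - A)" using a by auto
    then show "h A = (1 - y a) * (g A * prod y A * (\<Prod>u\<in>N - A. 1 - y u))"
      unfolding h_def using fin a by simp
  qed
  finally show ?thesis by simp
qed

lemma multilinear_cong:
  assumes "\<And>u. u \<in> N \<Longrightarrow> y u = z u"
  shows "multilinear N g y = multilinear N g z"
  unfolding multilinear_def using assms
  by (intro sum.cong refl arg_cong2[where f = "(*)"] prod.cong) auto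

lemma multilinear_add:
  "multilinear N (\<lambda>A. g A + h A) y = multilinear N g y + multilinear N h y"
  unfolding multilinear_def by (simp add: algebra_simps sum.distrib)

lemma multilinear_mono:
  assumes "\<And>A. A \<subseteq> N \<Longrightarrow> g A \<le> h A" and "\<And>u. u \<in> N \<Longrightarrow> 0 \<le> y u \<and> y u \<le> 1"
  shows "multilinear N g y \<le> multilinear N h y"
  unfolding multilinear_def using assms
  by (intro sum_mono mult_right_mono prod_nonneg) auto

lemma multilinear_nonneg:
  assumes "\<And>A. A \<subseteq> N \<Longrightarrow> 0 \<le> g A" and "\<And>u. u \<in> N \<Longrightarrow> 0 \<le> y u \<and> y u \<le> 1"
  shows "0 \<le> multilinear N g y"
  using multilinear_mono[of N "\<lambda>_. 0" g y] assms by (simp add: multilinear_def)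

lemma multilinear_fix_integral:
  assumes "finite D" "finite M" "M \<inter> D = {}" "\<forall>v\<in>D. y v = 0 \<or> y v = 1"
  shows "multilinear (M \<union> D) g y = multilinear M (\<lambda>R. g ({v\<in>D. y v = 1} \<union> R)) y"
  using assms
proof (induction D arbitrary: g rule: finite_induct)
  case empty
  then show ?case by simp
next
  case (insert a D)
  have rec: "multilinear (M \<union> insert a D) g y
     = y a * multilinear (M \<union> D) (\<lambda>A. g (insert a A)) y + (1 - y a) * multilinear (M \<union> D) g y"
    using insert multilinear_insert[of "M \<union> D" a] by auto
  from insert.prems consider "y a = 0" | "y a = 1" by auto
  then show ?case
  proof cases
    case 1
    then have "{v\<in>insert a D. y v = 1} = {v\<in>D. y v = 1}" by auto
    with 1 show ?thesis unfolding rec using insert by simp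
  next
    case 2
    then have "{v\<in>insert a D. y v = 1} = insert a {v\<in>D. y v = 1}" by auto
    with 2 show ?thesis unfolding rec using insert.IH[of "\<lambda>A. g (insert a A)"] insert.prems
      by simp
  qed
qed

lemma submodular_subset: "submodular N g \<Longrightarrow> M \<subseteq> N \<Longrightarrow> submodular M g"
  unfolding submodular_def by blast

lemma submodularD:
  "submodular N g \<Longrightarrow> A \<subseteq> N \<Longrightarrow> B \<subseteq> N \<Longrightarrow> g (A \<union> B) + g (A \<inter> B) \<le> g A + g B"
  unfolding submodular_def by blast

lemma submodular_union_left:
  assumes "submodular N f" "T \<subseteq> N" "M \<subseteq> N"
  shows "submodular M (\<lambda>R. f (T \<union> R))"
  unfolding submodular_def
proof (intro allI impI)
  fix A B assume "A \<subseteq> M" "B \<subseteq> M"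
  then have "f ((T \<union> A) \<union> (T \<union> B)) + f ((T \<union> A) \<inter> (T \<union> B)) \<le> f (T \<union> A) + f (T \<union> B)"
    using assms by (intro submodularD) auto
  moreover have "(T \<union> A) \<union> (T \<union> B) = T \<union> (A \<union> B)" "(T \<union> A) \<inter> (T \<union> B) = T \<union> (A \<inter> B)"
    by auto
  ultimately show "f (T \<union> (A \<union> B)) + f (T \<union> (A \<inter> B)) \<le> f (T \<union> A) + f (T \<union> B)" by simp
qed

lemma multilinear_union_ge:
  assumes "finite C" "finite B" "B \<inter> C = {}" "submodular (B \<union> C) g" "0 \<le> p" "p \<le> 1"
  shows "multilinear (B \<union> C) g (\<lambda>_. p)
     \<ge> (1 - p) * multilinear B g (\<lambda>_. p) + p * multilinear B (\<lambda>R. g (C \<union> R)) (\<lambda>_. p)"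
  using assms
proof (induction C arbitrary: g rule: finite_induct)
  case empty
  then show ?case by (simp add: algebra_simps)
next
  case (insert a C)
  let ?G = "\<lambda>h. multilinear B h (\<lambda>_. p)"
  define X where "X = multilinear (B \<union> C) (\<lambda>A. g (insert a A)) (\<lambda>_. p)"
  define Y where "Y = multilinear (B \<union> C) g (\<lambda>_. p)"
  have a: "a \<notin> B \<union> C" using insert by auto
  have sm: "submodular (insert a (B \<union> C)) g" using insert.prems by simp
  have p: "0 \<le> p" "0 \<le> 1 - p" using insert.prems by auto
  have "multilinear (B \<union> insert a C) g (\<lambda>_. p) = p * X + (1 - p) * Y"
    using multilinear_insert[OF _ a] insert.hyps insert.prems(1) unfolding X_def Y_def by simp
  moreover have "X \<ge> (1 - p) * ?G (\<lambda>R. g (insert a R)) + p * ?G (\<lambda>R. g (insert a C \<union> R))"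
    using insert.IH[of "\<lambda>A. g ({a} \<union> A)"] insert.prems
      submodular_union_left[OF sm, of "{a}" "B \<union> C"] unfolding X_def by auto
  moreover have "Y \<ge> (1 - p) * ?G g + p * ?G (\<lambda>R. g (C \<union> R))"
    using insert.IH[of g] insert.prems submodular_subset[OF sm] unfolding Y_def by auto
  moreover have "?G (\<lambda>R. g R + g (insert a C \<union> R)) \<le> ?G (\<lambda>R. g (insert a R) + g (C \<union> R))"
  proof (rule multilinear_mono)
    fix R assume R: "R \<subseteq> B"
    have "g (insert a R \<union> (C \<union> R)) + g (insert a R \<inter> (C \<union> R)) \<le> g (insert a R) + g (C \<union> R)"
      using R by (intro submodularD[OF sm]) auto
    moreover have "insert a R \<union> (C \<union> R) = insert a C \<union> R" "insert a R \<inter> (C \<union> R) = R"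
      using R insert by auto
    ultimately show "g R + g (insert a C \<union> R) \<le> g (insert a R) + g (C \<union> R)" by simp
  qed (use p in auto)
  then have "p * (1 - p) * (?G g + ?G (\<lambda>R. g (insert a C \<union> R)))
      \<le> p * (1 - p) * (?G (\<lambda>R. g (insert a R)) + ?G (\<lambda>R. g (C \<union> R)))"
    using p by (intro mult_left_mono) (auto simp: multilinear_add)
  ultimately show ?case
    using mult_left_mono[OF \<open>X \<ge> _\<close> p(1)] mult_left_mono[OF \<open>Y \<ge> _\<close> p(2)]
    by (simp add: algebra_simps)
qed

lemma multilinear_const_ge:
  assumes "finite B" "submodular B g" "0 \<le> p" "p \<le> 1"
  shows "multilinear B g (\<lambda>_. p) \<ge> (1 - p) * g {} + p * g B"
  using multilinear_union_ge[of B "{}" g p] assms by (simp add: multilinear_empty)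

text \<open>Once an increment is truncated by the budget, \<open>norm1 N x = k\<close> from then on.\<close>

definition alg1_invariant :: "'a set \<Rightarrow> nat \<Rightarrow> real \<Rightarrow> ('a \<Rightarrow> real) \<Rightarrow> bool" where
  "alg1_invariant N k p x \<longleftrightarrow> (\<forall>v. 0 \<le> x v) \<and> norm1 N x \<le> real k
     \<and> (norm1 N x < real k \<longrightarrow> (\<forall>v. x v = 0 \<or> x v = p))"

lemma norm1_add_indicator:
  assumes "finite N" "u \<in> N" "\<forall>v. 0 \<le> x v" "0 \<le> d"
  shows "norm1 N (\<lambda>v. x v + d * indicator {u} v) = norm1 N x + d"
  using assms by (simp add: norm1_def sum.distrib indicator_def)

lemma alg1_step_invariant:
  assumes "finite N" "u \<in> N" "0 < p" "alg1_invariant N k p x" "x u = 0"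
  shows "alg1_invariant N k p (alg1_step N f k p c \<tau> x u)"
proof -
  define d where "d = min p (real k - norm1 N x)"
  define x' where "x' v = x v + d * indicator {u} v" for v
  have x: "\<forall>v. 0 \<le> x v" "norm1 N x \<le> real k" "norm1 N x < real k \<Longrightarrow> x v = 0 \<or> x v = p" for v
    using assms(4) unfolding alg1_invariant_def by auto
  have d: "0 \<le> d" "norm1 N x + d \<le> real k" using x assms(3) unfolding d_def by auto
  have norm: "norm1 N x' = norm1 N x + d"
    unfolding x'_def using norm1_add_indicator[OF assms(1,2) x(1) d(1)] .
  have "x' v = 0 \<or> x' v = p" if "norm1 N x' < real k" for v
  proof -
    have "d = p" "norm1 N x < real k" using that d unfolding norm d_def by auto
    then show ?thesis using x(3)[of v] assms(5) unfolding x'_def by (cases "v = u") auto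
  qed
  then have "alg1_invariant N k p x'"
    unfolding alg1_invariant_def using x(1) d norm unfolding x'_def by auto
  then show ?thesis using assms(4) unfolding alg1_step_def x'_def d_def by simp
qed

lemma alg1_step_other: "v \<noteq> u \<Longrightarrow> alg1_step N f k p c \<tau> x u v = x v"
  unfolding alg1_step_def by simp

lemma alg1_foldl_invariant:
  assumes "finite N" "0 < p" "distinct xs" "set xs \<subseteq> N"
  shows "alg1_invariant N k p (foldl (alg1_step N f k p c \<tau>) (\<lambda>_. 0) xs)
    \<and> (\<forall>v. v \<notin> set xs \<longrightarrow> foldl (alg1_step N f k p c \<tau>) (\<lambda>_. 0) xs v = 0)"
  using assms(3,4)
proof (induction xs rule: rev_induct)
  case Nil
  then show ?case by (simp add: alg1_invariant_def norm1_def)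
next
  case (snoc u xs)
  then show ?case using alg1_step_invariant[OF assms(1) _ assms(2)] by (auto simp: alg1_step_other)
qed

lemma alg1_x_values:
  assumes "finite N" "0 < p" "distinct stream" "set stream = N"
    and "norm1 N (alg1_x N f k p c \<tau> stream) < real k"
  shows "alg1_x N f k p c \<tau> stream v = 0 \<or> alg1_x N f k p c \<tau> stream v = p"
  using alg1_foldl_invariant[of N p stream k f c \<tau>] assms
  unfolding alg1_x_def alg1_invariant_def by auto

lemma multilinear_const_ge_subset:
  assumes "finite S" "submodular S g" "\<And>A. A \<subseteq> S \<Longrightarrow> 0 \<le> g A" "B \<subseteq> S" "0 \<le> p" "p \<le> 1"
  shows "multilinear S g (\<lambda>_. p) \<ge> (1 - p) * ((1 - p) * g {} + p * g B)"
proof -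
  have fin: "finite B" "finite (S - B)" using assms(1,4) finite_subset by auto
  have "(1 - p) * ((1 - p) * g {} + p * g B) \<le> (1 - p) * multilinear B g (\<lambda>_. p)"
    using multilinear_const_ge[OF fin(1) submodular_subset[OF assms(2,4)] assms(5,6)] assms(6)
    by (simp add: mult_left_mono)
  also have "\<dots> \<le> (1 - p) * multilinear B g (\<lambda>_. p) + p * multilinear B (\<lambda>R. g ((S - B) \<union> R)) (\<lambda>_. p)"
  proof -
    have "0 \<le> multilinear B (\<lambda>R. g ((S - B) \<union> R)) (\<lambda>_. p)"
      using assms(3-6) by (intro multilinear_nonneg) auto
    then show ?thesis using assms(5) by simp
  qed
  also have "\<dots> \<le> multilinear S g (\<lambda>_. p)"
    using multilinear_union_ge[OF fin(2,1) _ _ assms(5,6), of g] assms(2,4)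
    by (simp add: Un_absorb1 Int_Diff)
  finally show ?thesis .
qed

lemma multilinear_scaled_indicator_add_indicator:
  assumes "finite N" "S \<subseteq> N" "T \<subseteq> N - S" "\<And>v. v \<in> N \<Longrightarrow> x v = (if v \<in> S then p else 0)"
    and "p \<noteq> 1"
  shows "multilinear N f (\<lambda>v. x v + indicator T v) = multilinear S (\<lambda>R. f (T \<union> R)) (\<lambda>_. p)"
proof -
  let ?y = "\<lambda>v. x v + indicator T v"
  have "{v\<in>N - S. ?y v = 1} = T" using assms(3,4) by (auto simp: indicator_def)
  moreover have "N = S \<union> (N - S)" using assms(2) by auto
  ultimately have "multilinear N f ?y = multilinear S (\<lambda>R. f (T \<union> R)) ?y"
    using multilinear_fix_integral[of "N - S" S ?y f] assms(1,4) finite_subset[OF assms(2,1)]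
    by (auto simp: indicator_def)
  also have "\<dots> = multilinear S (\<lambda>R. f (T \<union> R)) (\<lambda>_. p)"
    using assms(2-4) by (intro multilinear_cong) (auto simp: indicator_def)
  finally show ?thesis .
qed

theorem lemma3p4:
  fixes N :: "'a set" and f :: "'a set \<Rightarrow> real" and k :: nat
    and p c \<tau> :: real and stream :: "'a list" and OPT :: "'a set"
  assumes "finite N"
    and "\<forall>A\<subseteq>N. f A \<ge> 0"
    and "submodular N f"
    and "k > 0"
    and "0 < p" and "p < 1" and "c > 0"
    and "distinct stream" and "set stream = N"
    and "OPT \<subseteq> N" and "card OPT \<le> k"
    and "\<forall>S\<subseteq>N. card S \<le> k \<longrightarrow> f S \<le> f OPT"
    and "norm1 N (alg1_x N f k p c \<tau> stream) < real k"
  shows "multilinear N f (\<lambda>v. alg1_x N f k p c \<tau> stream v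
            + indicator (OPT - supp N (alg1_x N f k p c \<tau> stream)) v)
         \<ge> (1 - p) * (p * f OPT + (1 - p) * f (OPT - supp N (alg1_x N f k p c \<tau> stream)))"
proof -
  define x where "x = alg1_x N f k p c \<tau> stream"
  define S where "S = supp N x"
  define T where "T = OPT - S"
  have p: "0 \<le> p" "p \<le> 1" "p \<noteq> 1" using assms(5,6) by auto
  have x: "x v = (if v \<in> S then p else 0)" if "v \<in> N" for v
    using alg1_x_values[OF assms(1,5,8,9,13), of v] that assms(5)
    unfolding x_def[symmetric] S_def supp_def by auto
  have S: "S \<subseteq> N" "finite S" using assms(1) unfolding S_def supp_def by auto
  have T: "T \<subseteq> N - S" "T \<union> (S \<inter> OPT) = OPT" using assms(10) unfolding T_def by auto
  have "submodular S (\<lambda>R. f (T \<union> R))"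
    by (rule submodular_union_left[OF assms(3)]) (use S T in auto)
  then have "(1 - p) * ((1 - p) * f (T \<union> {}) + p * f (T \<union> (S \<inter> OPT)))
      \<le> multilinear S (\<lambda>R. f (T \<union> R)) (\<lambda>_. p)"
    using S(1) T(1) p
    by (intro multilinear_const_ge_subset[OF S(2)]) (auto intro!: assms(2)[rule_format])
  then have "(1 - p) * (p * f OPT + (1 - p) * f T) \<le> multilinear S (\<lambda>R. f (T \<union> R)) (\<lambda>_. p)"
    using T(2) by (simp add: add.commute)
  also have "\<dots> = multilinear N f (\<lambda>v. x v + indicator T v)"
    using multilinear_scaled_indicator_add_indicator[OF assms(1) S(1) T(1) x p(3)] by simp
  finally show ?thesis unfolding x_def S_def T_def .
qed

end
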